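(* Let $G=(V,E)$ be a simple graph with $n=|V|$ nodes and minimum degree $d$, where $d$ is a constant independent of $n$. Let $l$ be an integer in $[1,d-1]$ and let $\phi>\frac{l}{d}$ be a fixed uniform threshold. Let $S\subseteq V$ be a uniformly random subset of size $k=o(n^{\frac{l}{l+1}})$. Then $$\Pr_{S}\left[\mathrm{inf}^\phi_G(S)=S\right]=1-o(1)$$ as $n\to\infty$.
   Context: A simple graph has no multi-edges and no self-loops. Uniform threshold cascading with threshold $\phi$: given an initial set $S$, all nodes of $S$ are infected; repeatedly, a not-yet-infected node becomes infected if at least a $\phi$ fraction of its neighbors are infected. The final infected set is $\mathrm{inf}^\phi_G(S)$. *)

theory Defs
  imports Complex_Main "HOL-Library.Landau_Symbols"
begin

definition simple_graph :: "'a set \<Rightarrow> ('a \<Rightarrow> 'a \<Rightarrow> bool) \<Rightarrow> bool" where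
  "simple_graph V E \<longleftrightarrow> finite V \<and> (\<forall>u\<in>V. \<forall>v\<in>V. E u v \<longrightarrow> E v u) \<and> (\<forall>v\<in>V. \<not> E v v)"

definition nbrs :: "'a set \<Rightarrow> ('a \<Rightarrow> 'a \<Rightarrow> bool) \<Rightarrow> 'a \<Rightarrow> 'a set" where
  "nbrs V E v = {u \<in> V. E v u}"

definition degree :: "'a set \<Rightarrow> ('a \<Rightarrow> 'a \<Rightarrow> bool) \<Rightarrow> 'a \<Rightarrow> nat" where
  "degree V E v = card (nbrs V E v)"

definition min_degree :: "'a set \<Rightarrow> ('a \<Rightarrow> 'a \<Rightarrow> bool) \<Rightarrow> nat \<Rightarrow> bool" where
  "min_degree V E d \<longleftrightarrow> (\<forall>v\<in>V. d \<le> degree V E v) \<and> (\<exists>v\<in>V. degree V E v = d)"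

definition cascade_step :: "'a set \<Rightarrow> ('a \<Rightarrow> 'a \<Rightarrow> bool) \<Rightarrow> real \<Rightarrow> 'a set \<Rightarrow> 'a set" where
  "cascade_step V E \<phi> T = T \<union> {v \<in> V. \<phi> * real (degree V E v) \<le> real (card (nbrs V E v \<inter> T))}"

definition infected :: "'a set \<Rightarrow> ('a \<Rightarrow> 'a \<Rightarrow> bool) \<Rightarrow> real \<Rightarrow> 'a set \<Rightarrow> 'a set" where
  "infected V E \<phi> S = (\<Union>i. (cascade_step V E \<phi> ^^ i) S)"

definition no_spread_prob :: "'a set \<Rightarrow> ('a \<Rightarrow> 'a \<Rightarrow> bool) \<Rightarrow> real \<Rightarrow> nat \<Rightarrow> real" where
  "no_spread_prob V E \<phi> k =
     real (card {S. S \<subseteq> V \<and> card S = k \<and> infected V E \<phi> S = S})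
     / real (card {S. S \<subseteq> V \<and> card S = k})"

end

theory Submission
  imports Defs
begin

text \<open>If S is not already closed, some vertex v has at least \<phi> deg(v) > l neighbours in S,
  so S contains an (l+1)-subset of N(v); a fixed (l+1)-set lies in a uniform k-set with
  probability at most (k/n)^(l+1). Degrees are unbounded, so instead of a union bound over the
  (l+1)-subsets of N(v) we double count: a set meeting N(v) in at least \<phi> deg(v) points contains
  at least a (\<phi>/(l+1))^(l+1) fraction of them. Hence each vertex fails with probability
  O((k/n)^(l+1)), and summing over the n vertices gives O(k^(l+1)/n^l) = o(1).\<close>

lemma binomial_diff_mult_power_le:
  "j \<le> k \<Longrightarrow> k \<le> n \<Longrightarrow> ((n - j) choose (k - j)) * n ^ j \<le> k ^ j * (n choose k)"
proof (induction j arbitrary: n k)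
  case 0
  then show ?case by simp
next
  case (Suc j)
  then obtain n' k' where nk: "n = Suc n'" "k = Suc k'" by (metis Suc_le_D le_trans)
  have jk: "j \<le> k'" "k' \<le> n'" using Suc.prems nk by auto
  define X where "X = (n' - j) choose (k' - j)"
  have IH: "X * n' ^ j \<le> k' ^ j * (n' choose k')" using Suc.IH[OF jk] X_def by simp
  have absorb: "n * (n' choose k') = (n choose k) * k" using Suc_times_binomial_eq nk by simp
  have key: "X * n ^ j \<le> k ^ j * (n' choose k')"
  proof (cases "n' = 0")
    case True
    then show ?thesis using jk X_def nk by simp
  next
    case False
    have "(n * k') ^ j \<le> (k * n') ^ j" using jk nk by (intro power_mono) (simp_all add: algebra_simps)
    have "X * n ^ j * n' ^ j = (X * n' ^ j) * n ^ j" by simp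
    also have "\<dots> \<le> k' ^ j * (n' choose k') * n ^ j" using IH by simp
    also have "\<dots> = (n * k') ^ j * (n' choose k')" by (simp add: power_mult_distrib)
    also have "\<dots> \<le> (k * n') ^ j * (n' choose k')" using \<open>(n * k') ^ j \<le> (k * n') ^ j\<close> by simp
    also have "\<dots> = k ^ j * (n' choose k') * n' ^ j" by (simp add: power_mult_distrib)
    finally show ?thesis using False by simp
  qed
  have "((n - Suc j) choose (k - Suc j)) * n ^ Suc j = X * n ^ j * n"
    using nk X_def by (simp only: diff_Suc_Suc power_Suc mult_ac)
  also have "\<dots> \<le> k ^ j * (n' choose k') * n" using key by simp
  also have "\<dots> = k ^ Suc j * (n choose k)" using absorb by (simp add: mult_ac)
  finally show ?case .
qed

lemma card_supersets_eq:
  assumes "finite V" "T \<subseteq> V" "card T \<le> k"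
  shows "card {S. S \<subseteq> V \<and> card S = k \<and> T \<subseteq> S} = (card V - card T) choose (k - card T)"
proof -
  have fT: "finite T" using assms finite_subset by blast
  have "bij_betw (\<lambda>S. S - T) {S. S \<subseteq> V \<and> card S = k \<and> T \<subseteq> S} {U. U \<subseteq> V - T \<and> card U = k - card T}"
  proof (rule bij_betw_byWitness[where f'="\<lambda>U. U \<union> T"])
    show "(\<lambda>S. S - T) ` {S. S \<subseteq> V \<and> card S = k \<and> T \<subseteq> S} \<subseteq> {U. U \<subseteq> V - T \<and> card U = k - card T}"
      using fT by (auto simp: card_Diff_subset)
    show "(\<lambda>U. U \<union> T) ` {U. U \<subseteq> V - T \<and> card U = k - card T} \<subseteq> {S. S \<subseteq> V \<and> card S = k \<and> T \<subseteq> S}"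
    proof clarify
      fix U assume U: "U \<subseteq> V - T" "card U = k - card T"
      have "finite U" using U assms finite_subset by blast
      then have "card (U \<union> T) = card U + card T" using U fT by (intro card_Un_disjoint) auto
      then show "U \<union> T \<subseteq> V \<and> card (U \<union> T) = k \<and> T \<subseteq> U \<union> T" using U assms by auto
    qed
  qed blast+
  then have "card {S. S \<subseteq> V \<and> card S = k \<and> T \<subseteq> S} = card {U. U \<subseteq> V - T \<and> card U = k - card T}"
    by (rule bij_betw_same_card)
  also have "\<dots> = card (V - T) choose (k - card T)" using assms by (intro n_subsets) auto
  finally show ?thesis using assms fT by (simp add: card_Diff_subset)
qed

lemma card_supersets_le:
  assumes "finite V" "T \<subseteq> V" "k \<le> card V"
  shows "real (card {S. S \<subseteq> V \<and> card S = k \<and> T \<subseteq> S})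
    \<le> (real k / real (card V)) ^ card T * real (card V choose k)"
proof (cases "card T \<le> k")
  case False
  have "card T \<le> card S" if "S \<subseteq> V" "T \<subseteq> S" for S
    using that assms(1) by (meson card_mono finite_subset)
  then have none: "{S. S \<subseteq> V \<and> card S = k \<and> T \<subseteq> S} = {}" using False by force
  show ?thesis unfolding none by simp
next
  case True
  let ?n = "card V" and ?j = "card T"
  have "real ((?n - ?j) choose (k - ?j)) \<le> (real k / real ?n) ^ ?j * real (?n choose k)"
  proof (cases "?n = 0")
    case True
    then show ?thesis using \<open>?j \<le> k\<close> assms(3) by simp
  next
    case False
    have "real ((?n - ?j) choose (k - ?j)) * real ?n ^ ?j \<le> real k ^ ?j * real (?n choose k)"
      using binomial_diff_mult_power_le[OF True assms(3)] by (metis of_nat_le_iff of_nat_mult of_nat_power)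
    then show ?thesis using False by (simp add: power_divide pos_le_divide_eq)
  qed
  then show ?thesis using card_supersets_eq[OF assms(1,2) True] by simp
qed

lemma sum_card_filter_swap:
  assumes "finite A" "finite B"
  shows "(\<Sum>a\<in>A. card {b\<in>B. R a b}) = (\<Sum>b\<in>B. card {a\<in>A. R a b})"
proof -
  have "(\<Sum>a\<in>A. card {b\<in>B. R a b}) = (\<Sum>a\<in>A. \<Sum>b\<in>B. if R a b then 1 else 0)"
    using assms(2) by (simp add: sum.inter_filter[symmetric])
  also have "\<dots> = (\<Sum>b\<in>B. \<Sum>a\<in>A. if R a b then 1 else 0)" by (rule sum.swap)
  also have "\<dots> = (\<Sum>b\<in>B. card {a\<in>A. R a b})"
    using assms(1) by (simp add: sum.inter_filter[symmetric])
  finally show ?thesis .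
qed

lemma sum_binomial_card_inter_le:
  assumes "finite V" "N \<subseteq> V" "k \<le> card V"
  shows "real (\<Sum>S\<in>{S. S \<subseteq> V \<and> card S = k}. card (N \<inter> S) choose j)
    \<le> real (card N choose j) * ((real k / real (card V)) ^ j * real (card V choose k))"
proof -
  define A where "A = {S. S \<subseteq> V \<and> card S = k}"
  define TS where "TS = {T. T \<subseteq> N \<and> card T = j}"
  have fN: "finite N" using assms finite_subset by blast
  have fA: "finite A" unfolding A_def using assms(1) by simp
  have fTS: "finite TS" unfolding TS_def using fN by simp
  have "(\<Sum>S\<in>A. card (N \<inter> S) choose j) = (\<Sum>S\<in>A. card {T\<in>TS. T \<subseteq> S})"
  proof (rule sum.cong)
    fix S
    have "{T\<in>TS. T \<subseteq> S} = {T. T \<subseteq> N \<inter> S \<and> card T = j}" unfolding TS_def by blast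
    moreover have "finite (N \<inter> S)" using fN by simp
    ultimately show "card (N \<inter> S) choose j = card {T\<in>TS. T \<subseteq> S}"
      using n_subsets[of "N \<inter> S" j] by simp
  qed simp
  also have "\<dots> = (\<Sum>T\<in>TS. card {S\<in>A. T \<subseteq> S})" using fA fTS by (rule sum_card_filter_swap)
  finally have "real (\<Sum>S\<in>A. card (N \<inter> S) choose j) = (\<Sum>T\<in>TS. real (card {S\<in>A. T \<subseteq> S}))"
    by simp
  also have "\<dots> \<le> (\<Sum>T\<in>TS. (real k / real (card V)) ^ j * real (card V choose k))"
  proof (rule sum_mono)
    fix T assume "T \<in> TS"
    then have "T \<subseteq> V" "card T = j" using assms(2) unfolding TS_def by auto
    moreover have "{S\<in>A. T \<subseteq> S} = {S. S \<subseteq> V \<and> card S = k \<and> T \<subseteq> S}" unfolding A_def by blast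
    ultimately show "real (card {S\<in>A. T \<subseteq> S}) \<le> (real k / real (card V)) ^ j * real (card V choose k)"
      using card_supersets_le[OF assms(1) \<open>T \<subseteq> V\<close> assms(3)] by simp
  qed
  also have "\<dots> = real (card N choose j) * ((real k / real (card V)) ^ j * real (card V choose k))"
    unfolding TS_def using fN by (simp add: n_subsets)
  finally show ?thesis unfolding A_def .
qed

lemma binomial_le_scaled_binomial:
  fixes \<phi> :: real
  assumes "\<phi> > 0" "1 \<le> j" "j \<le> s" "\<phi> * real D \<le> real s"
  shows "real (D choose j) \<le> (real j / \<phi>) ^ j * real (s choose j)"
proof (cases "j \<le> D")
  case False
  then show ?thesis using assms by (simp add: binomial_eq_0)
next
  case True
  have "real (D choose j) \<le> real D ^ j" using binomial_le_pow[OF True] by (metis of_nat_le_iff of_nat_power)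
  also have "\<dots> \<le> (real s / \<phi>) ^ j"
    using assms by (intro power_mono) (auto simp: pos_le_divide_eq mult.commute)
  also have "\<dots> = (real j / \<phi>) ^ j * (real s / real j) ^ j"
    using assms by (simp add: power_mult_distrib[symmetric])
  also have "\<dots> \<le> (real j / \<phi>) ^ j * real (s choose j)"
    using assms by (intro mult_left_mono binomial_ge_n_over_k_pow_k) auto
  finally show ?thesis .
qed

lemma card_threshold_subsets_le:
  fixes \<phi> :: real
  assumes "finite V" "N \<subseteq> V" "k \<le> card V" "1 \<le> j" "real j - 1 < \<phi> * real (card N)"
  shows "real (card {S. S \<subseteq> V \<and> card S = k \<and> \<phi> * real (card N) \<le> real (card (N \<inter> S))})
    \<le> (real j / \<phi>) ^ j * ((real k / real (card V)) ^ j * real (card V choose k))"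
proof -
  define A where "A = {S. S \<subseteq> V \<and> card S = k}"
  define B where "B = {S. S \<subseteq> V \<and> card S = k \<and> \<phi> * real (card N) \<le> real (card (N \<inter> S))}"
  define K where "K = (real j / \<phi>) ^ j"
  define R where "R = (real k / real (card V)) ^ j * real (card V choose k)"
  have fN: "finite N" using assms finite_subset by blast
  have fA: "finite A" unfolding A_def using assms(1) by simp
  have "\<phi> * real (card N) > 0" using assms(4,5) by linarith
  then have \<phi>: "\<phi> > 0" by (simp add: zero_less_mult_iff)
  have large: "j \<le> card (N \<inter> S)" if "S \<in> B" for S
    using that assms(5) unfolding B_def by fastforce
  show ?thesis
  proof (cases "B = {}")
    case True
    then show ?thesis using \<phi> unfolding B_def[symmetric] by simp
  next
    case False
    then obtain S0 where "S0 \<in> B" by blast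
    then have "j \<le> card N" using large fN card_mono[of N "N \<inter> S0"] by fastforce
    then have pos: "real (card N choose j) > 0" by simp
    have "real (card B) * real (card N choose j) = (\<Sum>S\<in>B. real (card N choose j))" by simp
    also have "\<dots> \<le> (\<Sum>S\<in>B. K * real (card (N \<inter> S) choose j))"
      using binomial_le_scaled_binomial[OF \<phi> assms(4) large] unfolding K_def B_def
      by (intro sum_mono) auto
    also have "\<dots> \<le> K * real (\<Sum>S\<in>A. card (N \<inter> S) choose j)"
      unfolding sum_distrib_left[symmetric] of_nat_sum
      using \<phi> fA by (intro mult_left_mono sum_mono2) (auto simp: K_def A_def B_def)
    also have "\<dots> \<le> K * (real (card N choose j) * R)"
      using sum_binomial_card_inter_le[OF assms(1-3)] \<phi> unfolding A_def K_def R_def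
      by (intro mult_left_mono) auto
    finally have "real (card B) \<le> K * R" using pos by (simp add: mult_ac)
    then show ?thesis unfolding A_def B_def K_def R_def by simp
  qed
qed

lemma infected_eq_self:
  assumes "cascade_step V E \<phi> S = S"
  shows "infected V E \<phi> S = S"
proof -
  have "(cascade_step V E \<phi> ^^ i) S = S" for i by (induction i) (simp_all add: assms)
  then show ?thesis unfolding infected_def by simp
qed

lemma card_spreading_subsets_le:
  fixes \<phi> :: real
  assumes "finite V" "\<forall>v\<in>V. d \<le> degree V E v" "real l < \<phi> * real d" "k \<le> card V"
  shows "real (card {S. S \<subseteq> V \<and> card S = k \<and> infected V E \<phi> S \<noteq> S})
    \<le> real (card V) * ((real (l + 1) / \<phi>) ^ (l + 1) * ((real k / real (card V)) ^ (l + 1) * real (card V choose k)))"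
proof -
  define Q where "Q = (real (l + 1) / \<phi>) ^ (l + 1) * ((real k / real (card V)) ^ (l + 1) * real (card V choose k))"
  define Bv where "Bv v = {S. S \<subseteq> V \<and> card S = k \<and> \<phi> * real (degree V E v) \<le> real (card (nbrs V E v \<inter> S))}" for v
  have "\<phi> * real d > 0" using assms(3) by linarith
  then have \<phi>: "\<phi> > 0" by (simp add: zero_less_mult_iff)
  have "{S. S \<subseteq> V \<and> card S = k \<and> infected V E \<phi> S \<noteq> S} \<subseteq> (\<Union>v\<in>V. Bv v)"
  proof
    fix S assume S: "S \<in> {S. S \<subseteq> V \<and> card S = k \<and> infected V E \<phi> S \<noteq> S}"
    then have "cascade_step V E \<phi> S \<noteq> S" using infected_eq_self by blast
    then obtain v where "v \<in> V" "\<phi> * real (degree V E v) \<le> real (card (nbrs V E v \<inter> S))"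
      unfolding cascade_step_def by auto
    then show "S \<in> (\<Union>v\<in>V. Bv v)" using S unfolding Bv_def by blast
  qed
  then have "card {S. S \<subseteq> V \<and> card S = k \<and> infected V E \<phi> S \<noteq> S} \<le> card (\<Union>v\<in>V. Bv v)"
    using assms(1) by (intro card_mono) (simp_all add: Bv_def)
  also have "\<dots> \<le> (\<Sum>v\<in>V. card (Bv v))" by (rule card_UN_le[OF assms(1)])
  finally have "real (card {S. S \<subseteq> V \<and> card S = k \<and> infected V E \<phi> S \<noteq> S}) \<le> (\<Sum>v\<in>V. real (card (Bv v)))"
    by (simp flip: of_nat_sum)
  also have "\<dots> \<le> (\<Sum>v\<in>V. Q)"
  proof (rule sum_mono)
    fix v assume "v \<in> V"
    have "\<phi> * real d \<le> \<phi> * real (degree V E v)"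
      using \<phi> assms(2) \<open>v \<in> V\<close> by (simp add: mult_left_mono)
    then have "real (l + 1) - 1 < \<phi> * real (card (nbrs V E v))"
      using assms(3) unfolding degree_def by simp
    from card_threshold_subsets_le[OF assms(1) _ assms(4) _ this]
    show "real (card (Bv v)) \<le> Q"
      unfolding Bv_def Q_def degree_def by (simp add: nbrs_def)
  qed
  finally show ?thesis unfolding Q_def by simp
qed

lemma no_spread_prob_bounds:
  fixes \<phi> :: real
  assumes "finite V" "V \<noteq> {}" "\<forall>v\<in>V. d \<le> degree V E v" "real l < \<phi> * real d" "k \<le> card V"
  shows "1 - (real (l + 1) / \<phi>) ^ (l + 1) * (real k ^ (l + 1) / real (card V) ^ l) \<le> no_spread_prob V E \<phi> k"
    and "no_spread_prob V E \<phi> k \<le> 1"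
proof -
  let ?n = "card V"
  define K where "K = (real (l + 1) / \<phi>) ^ (l + 1)"
  define A where "A = {S. S \<subseteq> V \<and> card S = k}"
  define G where "G = {S\<in>A. infected V E \<phi> S = S}"
  define B where "B = {S\<in>A. infected V E \<phi> S \<noteq> S}"
  have n: "?n > 0" using assms(1,2) by (simp add: card_gt_0_iff)
  have cA: "card A = ?n choose k" unfolding A_def using n_subsets[OF assms(1)] by simp
  have Apos: "real (card A) > 0" using cA assms(5) by simp
  have fA: "finite A" unfolding A_def using assms(1) by simp
  have "card A = card G + card B"
    unfolding G_def B_def using fA by (subst card_Un_disjoint[symmetric]) (auto intro: arg_cong[where f=card])
  then have eq: "no_spread_prob V E \<phi> k = 1 - real (card B) / real (card A)"
    using Apos unfolding no_spread_prob_def A_def G_def by (simp add: field_simps)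
  then show "no_spread_prob V E \<phi> k \<le> 1" by simp
  have "real (card B) \<le> real ?n * (K * ((real k / real ?n) ^ (l + 1) * real (card A)))"
    using card_spreading_subsets_le[OF assms(1,3,4,5)] cA unfolding B_def A_def K_def by simp
  also have "\<dots> = K * (real k ^ (l + 1) / real ?n ^ l) * real (card A)"
    using n by (simp add: power_divide field_simps)
  finally show "1 - (real (l + 1) / \<phi>) ^ (l + 1) * (real k ^ (l + 1) / real ?n ^ l) \<le> no_spread_prob V E \<phi> k"
    unfolding eq K_def[symmetric] using Apos by (simp add: divide_le_eq)
qed

lemma power_over_power_tendsto_zero:
  fixes k :: "nat \<Rightarrow> nat"
  assumes "(\<lambda>n. real (k n)) \<in> o(\<lambda>n. real n powr (real l / real (l + 1)))"
  shows "(\<lambda>n. real (k n) ^ (l + 1) / real n ^ l) \<longlonglongrightarrow> 0"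
proof -
  have "(\<lambda>n. real (k n) ^ (l + 1)) \<in> o(\<lambda>n. (real n powr (real l / real (l + 1))) ^ (l + 1))"
    using assms by (intro landau_o.small_power) auto
  then have "(\<lambda>n. real (k n) ^ (l + 1) / (real n powr (real l / real (l + 1))) ^ (l + 1)) \<longlonglongrightarrow> 0"
    by (rule smalloD_tendsto)
  moreover have "\<forall>\<^sub>F n in sequentially.
      real (k n) ^ (l + 1) / (real n powr (real l / real (l + 1))) ^ (l + 1) = real (k n) ^ (l + 1) / real n ^ l"
    using eventually_gt_at_top[of 0]
  proof eventually_elim
    case (elim n)
    then have "(real n powr (real l / real (l + 1))) ^ (l + 1) = real n powr (real (l + 1) * (real l / real (l + 1)))"
      by (intro powr_power) simp
    also have "real (l + 1) * (real l / real (l + 1)) = real l" by simp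
    also have "real n powr real l = real n ^ l" using elim by (simp add: powr_realpow)
    finally show ?case by simp
  qed
  ultimately show ?thesis by (rule Lim_transform_eventually)
qed

lemma le_of_power_div_power_less_one:
  assumes "n > 0" "real k ^ (l + 1) / real n ^ l < 1"
  shows "k \<le> n"
proof -
  have "real k ^ (l + 1) < real n ^ l" using assms by (simp add: divide_less_eq)
  also have "\<dots> \<le> real n ^ (l + 1)" using assms(1) by (intro power_increasing) auto
  finally have "real k < real n" by (rule power_less_imp_less_base) simp
  then show ?thesis by simp
qed

theorem theorem8:
  fixes E :: "nat \<Rightarrow> nat \<Rightarrow> nat \<Rightarrow> bool"
    and d l :: nat and \<phi> :: real and k :: "nat \<Rightarrow> nat"
  assumes graphs: "\<forall>\<^sub>F n in sequentially. simple_graph {..<n} (E n) \<and> min_degree {..<n} (E n) d"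
    and l_range: "1 \<le> l" "l \<le> d - 1"
    and phi: "\<phi> > real l / real d"
    and k_small: "(\<lambda>n. real (k n)) \<in> o(\<lambda>n. real n powr (real l / real (l + 1)))"
  shows "(\<lambda>n. no_spread_prob {..<n} (E n) \<phi> (k n)) \<longlonglongrightarrow> 1"
proof -
  define K where "K = (real (l + 1) / \<phi>) ^ (l + 1)"
  define r where "r n = real (k n) ^ (l + 1) / real n ^ l" for n
  have r: "r \<longlonglongrightarrow> 0" unfolding r_def using k_small by (rule power_over_power_tendsto_zero)
  have threshold: "real l < \<phi> * real d" using phi l_range by (simp add: divide_less_eq mult.commute)
  have "\<forall>\<^sub>F n in sequentially. k n \<le> n"
    using order_tendstoD(2)[OF r zero_less_one] eventually_gt_at_top[of 0]
    by eventually_elim (rule le_of_power_div_power_less_one, simp_all add: r_def)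
  then have bounds: "\<forall>\<^sub>F n in sequentially.
      1 - K * r n \<le> no_spread_prob {..<n} (E n) \<phi> (k n) \<and> no_spread_prob {..<n} (E n) \<phi> (k n) \<le> 1"
    using graphs eventually_gt_at_top[of 0]
  proof eventually_elim
    case (elim n)
    then have "finite {..<n}" "{..<n} \<noteq> {}" "\<forall>v\<in>{..<n}. d \<le> degree {..<n} (E n) v" "k n \<le> card {..<n}"
      by (auto simp: min_degree_def)
    from no_spread_prob_bounds[OF this(1-3) threshold this(4)] show ?case
      unfolding K_def r_def card_lessThan by blast
  qed
  have lower: "\<forall>\<^sub>F n in sequentially. 1 - K * r n \<le> no_spread_prob {..<n} (E n) \<phi> (k n)"
    and upper: "\<forall>\<^sub>F n in sequentially. no_spread_prob {..<n} (E n) \<phi> (k n) \<le> 1"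
    using bounds by (auto elim: eventually_mono)
  have "(\<lambda>n. 1 - K * r n) \<longlonglongrightarrow> 1 - K * 0"
    by (intro tendsto_diff tendsto_mult tendsto_const r)
  then have "(\<lambda>n. 1 - K * r n) \<longlonglongrightarrow> 1" by simp
  from tendsto_sandwich[OF lower upper this tendsto_const] show ?thesis .
qed

end
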